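(* Let $A$ be a type and $t$ a term. (1) If $\mathbb G\vdash^* t:A;\mathbb D$, then $t\in\mathbb I(A)$. (2) If $t\in\mathbb I(A)$, then $\mathbb G\vdash^* t:A;\mathbb D$.
   Context: $\lambda\mu$-terms: $t::= x\mid \lambda x.t\mid (t\;t)\mid \mu a.t\mid (a\;t)$ over disjoint infinite sets of $\lambda$-variables and $\mu$-variables; types built from propositional variables and $\perp$ with $\to$. Reduction $(\lambda x.u\;v)\triangleright u[x:=v]$, $(\mu a.u\;v)\triangleright\mu a.u[a:=^*v]$ ($u[a:=^*v]$ replaces each subterm $(a\;w)$ of $u$ by $(a\;(w\;v))$), $\triangleright^*$ reflexive transitive compatible closure. Typing rules for $\Gamma\vdash t:A;\Delta$: (ax) $\Gamma\vdash x:A;\Delta$ if $x:A\in\Gamma$; ($\to_i$) from $\Gamma,x:A\vdash t:B;\Delta$ infer $\Gamma\vdash\lambda x.t:A\to B;\Delta$; ($\to_e$) from $\Gamma\vdash u:A\to B;\Delta$, $\Gamma\vdash v:A;\Delta$ infer $\Gamma\vdash(u\;v):B;\Delta$; ($\mu$) from $\Gamma\vdash t:\perp;\Delta,a:A$ infer $\Gamma\vdash\mu a.t:A;\Delta$; ($\perp$) from $\Gamma\vdash t:A;\Delta,a:A$ infer $\Gamma\vdash(a\;t):\perp;\Delta,a:A$. Term model: $\Omega=\{x_i\}_{i\in\mathbb N}\cup\{a_j\}_{j\in\mathbb N}$ enumerates infinite sets of $\lambda$- and $\mu$-variables; $(A_i)_{i\in\mathbb N}$ enumerates all types with each type occurring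 infinitely often; $(B_j)_{j\in\mathbb N}$ enumerates all types with $\perp$ occurring infinitely often. $\mathbb G=\{x_i:A_i\}$, $\mathbb D=\{a_j:B_j\}$. For a term $u$, $\mathbb G\vdash u:C;\mathbb D$ means $Fv(u)\subseteq\Omega$ and $\mathbb G_u\vdash u:C;\mathbb D_u$ where $\mathbb G_u,\mathbb D_u$ are the restrictions of $\mathbb G,\mathbb D$ to the free variables of $u$; $\mathbb G\vdash^* u:C;\mathbb D$ means there is $u'$ with $u\triangleright^*u'$ and $\mathbb G\vdash u':C;\mathbb D$. $\mathbb S=\{t:\mathbb G\vdash^*t:\perp;\mathbb D\}$, and for each propositional variable $X$, $\mathbb R_X=\{t:\mathbb G\vdash^*t:X;\mathbb D\}$. For sets of terms, $\mathcal K\leadsto\mathcal L=\{t:(t\;u)\in\mathcal L\ \forall u\in\mathcal K\}$. The interpretation $\mathbb I$ is defined by $\mathbb I(\perp)=\mathbb S$, $\mathbb I(X)=\mathbb R_X$, $\mathbb I(B\to C)=\mathbb I(B)\leadsto\mathbb I(C)$. *)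

theory Defs
  imports Main
begin

datatype ty = PV nat | Bot | Arr ty ty

text \<open>Lambda-mu terms in de Bruijn notation with two disjoint index spaces:
  lambda-variables (Var) bound by Lam, and mu-variables (in Named a t = (a t)) bound by Mu.
  Free lambda-variable x_i is Var i (outside all binders), free mu-variable a_j is index j.\<close>
datatype trm = Var nat | Lam trm | App trm trm | Mu trm | Named nat trm

fun liftL :: "nat \<Rightarrow> trm \<Rightarrow> trm" where
  "liftL k (Var i) = (if i < k then Var i else Var (Suc i))"
| "liftL k (Lam t) = Lam (liftL (Suc k) t)"
| "liftL k (App t u) = App (liftL k t) (liftL k u)"
| "liftL k (Mu t) = Mu (liftL k t)"
| "liftL k (Named a t) = Named a (liftL k t)"

fun liftM :: "nat \<Rightarrow> trm \<Rightarrow> trm" where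
  "liftM k (Var i) = Var i"
| "liftM k (Lam t) = Lam (liftM k t)"
| "liftM k (App t u) = App (liftM k t) (liftM k u)"
| "liftM k (Mu t) = Mu (liftM (Suc k) t)"
| "liftM k (Named a t) = Named (if a < k then a else Suc a) (liftM k t)"

fun substL :: "trm \<Rightarrow> nat \<Rightarrow> trm \<Rightarrow> trm" where
  "substL (Var i) k v = (if i < k then Var i else if i = k then v else Var (i - 1))"
| "substL (Lam t) k v = Lam (substL t (Suc k) (liftL 0 v))"
| "substL (App t u) k v = App (substL t k v) (substL u k v)"
| "substL (Mu t) k v = Mu (substL t k (liftM 0 v))"
| "substL (Named a t) k v = Named a (substL t k v)"

fun substM :: "trm \<Rightarrow> nat \<Rightarrow> trm \<Rightarrow> trm" where
  "substM (Var i) k v = Var i"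
| "substM (Lam t) k v = Lam (substM t k (liftL 0 v))"
| "substM (App t u) k v = App (substM t k v) (substM u k v)"
| "substM (Mu t) k v = Mu (substM t (Suc k) (liftM 0 v))"
| "substM (Named a t) k v =
     (if a = k then Named a (App (substM t k v) v) else Named a (substM t k v))"

inductive red1 :: "trm \<Rightarrow> trm \<Rightarrow> bool" where
  beta: "red1 (App (Lam u) v) (substL u 0 v)"
| mu: "red1 (App (Mu u) v) (Mu (substM u 0 (liftM 0 v)))"
| lam: "red1 t t' \<Longrightarrow> red1 (Lam t) (Lam t')"
| appL: "red1 t t' \<Longrightarrow> red1 (App t u) (App t' u)"
| appR: "red1 u u' \<Longrightarrow> red1 (App t u) (App t u')"
| muc: "red1 t t' \<Longrightarrow> red1 (Mu t) (Mu t')"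
| named: "red1 t t' \<Longrightarrow> red1 (Named a t) (Named a t')"

abbreviation reds :: "trm \<Rightarrow> trm \<Rightarrow> bool" where
  "reds \<equiv> red1\<^sup>*\<^sup>*"

inductive typing :: "(nat \<Rightarrow> ty) \<Rightarrow> trm \<Rightarrow> ty \<Rightarrow> (nat \<Rightarrow> ty) \<Rightarrow> bool" where
  ax: "\<Gamma> x = A \<Longrightarrow> typing \<Gamma> (Var x) A \<Delta>"
| arrI: "typing (case_nat A \<Gamma>) t B \<Delta> \<Longrightarrow> typing \<Gamma> (Lam t) (Arr A B) \<Delta>"
| arrE: "typing \<Gamma> u (Arr A B) \<Delta> \<Longrightarrow> typing \<Gamma> v A \<Delta> \<Longrightarrow> typing \<Gamma> (App u v) B \<Delta>"
| muI: "typing \<Gamma> t Bot (case_nat A \<Delta>) \<Longrightarrow> typing \<Gamma> (Mu t) A \<Delta>"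
| botI: "\<Delta> a = A \<Longrightarrow> typing \<Gamma> t A \<Delta> \<Longrightarrow> typing \<Gamma> (Named a t) Bot \<Delta>"

text \<open>The term model, relative to the enumerations G (x_i : G i) and D (a_j : D j).\<close>
definition typstar :: "(nat \<Rightarrow> ty) \<Rightarrow> (nat \<Rightarrow> ty) \<Rightarrow> trm \<Rightarrow> ty \<Rightarrow> bool" where
  "typstar G D t C \<longleftrightarrow> (\<exists>u. reds t u \<and> typing G u C D)"

definition SS :: "(nat \<Rightarrow> ty) \<Rightarrow> (nat \<Rightarrow> ty) \<Rightarrow> trm set" where
  "SS G D = {t. typstar G D t Bot}"

definition RR :: "(nat \<Rightarrow> ty) \<Rightarrow> (nat \<Rightarrow> ty) \<Rightarrow> nat \<Rightarrow> trm set" where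
  "RR G D X = {t. typstar G D t (PV X)}"

definition arrow_set :: "trm set \<Rightarrow> trm set \<Rightarrow> trm set" where
  "arrow_set K L = {t. \<forall>u\<in>K. App t u \<in> L}"

fun interp :: "(nat \<Rightarrow> ty) \<Rightarrow> (nat \<Rightarrow> ty) \<Rightarrow> ty \<Rightarrow> trm set" where
  "interp G D Bot = SS G D"
| "interp G D (PV X) = RR G D X"
| "interp G D (Arr B C) = arrow_set (interp G D B) (interp G D C)"

end

theory Submission
  imports Defs
begin

text \<open>Only direction (2) at arrow types needs an idea. If \<open>t \<in> \<lbrakk>B \<rightarrow> C\<rbrakk>\<close>, pick
  \<open>x\<close> with \<open>G x = B\<close>; inductively \<open>x \<in> \<lbrakk>B\<rbrakk>\<close>, so \<open>t x \<rhd>\<^sup>* w\<close> with \<open>w\<close> of type \<open>C\<close>,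
  and this has to be pulled back to a reduct of \<open>t\<close>. We relate a term \<open>u\<close> to the terms
  \<open>s\<close> that arise from \<open>u\<close> by supplying the argument \<open>x\<close> at the head and at every named
  subterm \<open>(a w)\<close> whose \<open>\<mu>\<close>-variable \<open>a\<close> is a designated site, with the redexes so
  created partially contracted. Each reduction step of \<open>s\<close> is matched by reductions
  of \<open>u\<close>, so \<open>t \<rhd>\<^sup>* t'\<close> with \<open>t'\<close> related to \<open>w\<close>; and a typing of \<open>s\<close> at \<open>C\<close> yields
  one of \<open>u\<close> at \<open>G x \<rightarrow> C\<close>, each site \<open>a\<close> being retyped from \<open>D a\<close> to \<open>B \<rightarrow> D a\<close>.
  Since \<open>x\<close> need not be fresh, of the hypotheses on the enumerations only the
  surjectivity of \<open>G\<close> is used.\<close>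

fun psubstL :: "(nat \<Rightarrow> trm) \<Rightarrow> trm \<Rightarrow> trm" where
  "psubstL \<sigma> (Var i) = \<sigma> i"
| "psubstL \<sigma> (Lam t) = Lam (psubstL (case_nat (Var 0) (\<lambda>i. liftL 0 (\<sigma> i))) t)"
| "psubstL \<sigma> (App t u) = App (psubstL \<sigma> t) (psubstL \<sigma> u)"
| "psubstL \<sigma> (Mu t) = Mu (psubstL (\<lambda>i. liftM 0 (\<sigma> i)) t)"
| "psubstL \<sigma> (Named a t) = Named a (psubstL \<sigma> t)"

definition subst_env :: "nat \<Rightarrow> trm \<Rightarrow> nat \<Rightarrow> trm" where
  "subst_env k v i = (if i < k then Var i else if i = k then v else Var (i - 1))"

lemma substL_eq_psubstL: "substL t k v = psubstL (subst_env k v) t"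
proof (induction t arbitrary: k v)
  case (Lam t)
  have "case_nat (Var 0) (\<lambda>i. liftL 0 (subst_env k v i)) = subst_env (Suc k) (liftL 0 v)"
    by (rule ext) (auto simp: subst_env_def split: nat.split)
  then show ?case using Lam by simp
next
  case (Mu t)
  have "(\<lambda>i. liftM 0 (subst_env k v i)) = subst_env k (liftM 0 v)"
    by (rule ext) (auto simp: subst_env_def)
  then show ?case using Mu by simp
qed (auto simp: subst_env_def)

lemma liftL_eq_psubstL: "liftL k t = psubstL (\<lambda>i. Var (if i < k then i else Suc i)) t"
proof (induction t arbitrary: k)
  case (Lam t)
  have "case_nat (Var 0) (\<lambda>i. liftL 0 (Var (if i < k then i else Suc i)))
        = (\<lambda>i. Var (if i < Suc k then i else Suc i))"
    by (rule ext) (auto split: nat.split)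
  then show ?case using Lam by simp
qed auto

lemma liftL_0_eq_psubstL: "liftL 0 t = psubstL (\<lambda>i. Var (Suc i)) t"
  by (simp add: liftL_eq_psubstL)

lemma psubstL_Var: "psubstL Var t = t"
proof -
  have "case_nat (Var 0) (\<lambda>i. Var (Suc i)) = Var"
    by (rule ext) (simp split: nat.split)
  then show ?thesis by (induction t) simp_all
qed

definition ren_up :: "(nat \<Rightarrow> nat) \<Rightarrow> nat \<Rightarrow> nat" where
  "ren_up f = case_nat 0 (\<lambda>i. Suc (f i))"

lemma ren_up_simps [simp]: "ren_up f 0 = 0" "ren_up f (Suc i) = Suc (f i)"
  by (simp_all add: ren_up_def)

lemma ren_up_id [simp]: "ren_up (\<lambda>i. i) = (\<lambda>i. i)"
  by (rule ext) (simp add: ren_up_def split: nat.split)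

lemma psubstL_rename_Lam:
  "psubstL (\<lambda>i. Var (f i)) (Lam t) = Lam (psubstL (\<lambda>i. Var (ren_up f i)) t)"
proof -
  have "case_nat (Var 0) (\<lambda>i. Var (Suc (f i))) = (\<lambda>i. Var (ren_up f i))"
    by (rule ext) (simp split: nat.split)
  then show ?thesis by simp
qed

lemma reds_cong:
  assumes "\<And>t t'. red1 t t' \<Longrightarrow> red1 (f t) (f t')" and "reds t t'"
  shows "reds (f t) (f t')"
  using assms(2) by induction (auto intro: rtranclp.rtrancl_into_rtrancl assms(1))

lemma reds_Lam: "reds t t' \<Longrightarrow> reds (Lam t) (Lam t')"
  by (rule reds_cong) (rule red1.lam)

lemma reds_Mu: "reds t t' \<Longrightarrow> reds (Mu t) (Mu t')"
  by (rule reds_cong) (rule red1.muc)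

lemma reds_Named: "reds t t' \<Longrightarrow> reds (Named a t) (Named a t')"
  by (rule reds_cong) (rule red1.named)

lemma reds_App: "reds t t' \<Longrightarrow> reds u u' \<Longrightarrow> reds (App t u) (App t' u')"
  using reds_cong[of "\<lambda>t. App t u" t t'] reds_cong[of "App t'" u u']
  by (meson red1.appL red1.appR rtranclp_trans)

text \<open>\<open>app_rel x K \<rho> u s\<close>: \<open>s\<close> arises from \<open>u\<close> by renaming free \<open>\<lambda>\<close>-variables along
  \<open>\<rho>\<close> and, at each named subterm \<open>(a w)\<close> with \<open>a \<in> K\<close>, replacing \<open>w\<close> by a term
  \<open>app_site\<close>-related to it. \<open>app_site x K \<rho> w s\<close>: \<open>s\<close> represents \<open>(w x)\<close>, either
  literally, or after contracting a \<open>\<beta>\<close>-redex (the bound variable becomes \<open>x\<close>), or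
  after contracting a \<open>\<mu>\<close>-redex (the new \<open>\<mu>\<close>-variable \<open>0\<close> becomes a site).\<close>

inductive app_rel :: "nat \<Rightarrow> nat set \<Rightarrow> (nat \<Rightarrow> nat) \<Rightarrow> trm \<Rightarrow> trm \<Rightarrow> bool"
  and app_site :: "nat \<Rightarrow> nat set \<Rightarrow> (nat \<Rightarrow> nat) \<Rightarrow> trm \<Rightarrow> trm \<Rightarrow> bool" where
  rel_Var: "\<rho> i = j \<Longrightarrow> app_rel x K \<rho> (Var i) (Var j)"
| rel_Lam: "app_rel (Suc x) K (ren_up \<rho>) u s \<Longrightarrow> app_rel x K \<rho> (Lam u) (Lam s)"
| rel_App: "app_rel x K \<rho> u1 s1 \<Longrightarrow> app_rel x K \<rho> u2 s2 \<Longrightarrow> app_rel x K \<rho> (App u1 u2) (App s1 s2)"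
| rel_Mu: "app_rel x (Suc ` K) \<rho> u s \<Longrightarrow> app_rel x K \<rho> (Mu u) (Mu s)"
| rel_Named: "a \<notin> K \<Longrightarrow> app_rel x K \<rho> u s \<Longrightarrow> app_rel x K \<rho> (Named a u) (Named a s)"
| rel_site: "a \<in> K \<Longrightarrow> app_site x K \<rho> u s \<Longrightarrow> app_rel x K \<rho> (Named a u) (Named a s)"
| site_App: "app_rel x K \<rho> u s \<Longrightarrow> app_site x K \<rho> u (App s (Var x))"
| site_beta: "app_rel x K (case_nat x \<rho>) u s \<Longrightarrow> app_site x K \<rho> (Lam u) s"
| site_mu: "app_rel x (insert 0 (Suc ` K)) \<rho> u s \<Longrightarrow> app_site x K \<rho> (Mu u) (Mu s)"

lemma app_rel_refl: "app_rel x {} (\<lambda>i. i) t t"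
proof (induction t arbitrary: x)
  case (Lam t)
  then show ?case using rel_Lam[of x "{}" "\<lambda>i. i"] by simp
next
  case (Mu t)
  then show ?case using rel_Mu[of x "{}"] by simp
qed (simp_all add: rel_Var rel_App rel_Named)

lemma app_rel_rename:
  "app_rel x K \<rho> p p' \<Longrightarrow> (\<And>f g \<rho>'. \<forall>i. \<rho>' (f i) = g (\<rho> i) \<Longrightarrow>
      app_rel (g x) K \<rho>' (psubstL (\<lambda>i. Var (f i)) p) (psubstL (\<lambda>i. Var (g i)) p'))"
  "app_site x K \<rho> p p' \<Longrightarrow> (\<And>f g \<rho>'. \<forall>i. \<rho>' (f i) = g (\<rho> i) \<Longrightarrow>
      app_site (g x) K \<rho>' (psubstL (\<lambda>i. Var (f i)) p) (psubstL (\<lambda>i. Var (g i)) p'))"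
proof (induction rule: app_rel_app_site.inducts)
  case (rel_Lam x K \<rho> u s)
  have "\<forall>i. ren_up \<rho>' (ren_up f i) = ren_up g (ren_up \<rho> i)"
    using rel_Lam.prems by (auto simp: ren_up_def split: nat.split)
  from rel_Lam.IH[where f="ren_up f" and g="ren_up g" and \<rho>'="ren_up \<rho>'", OF this] show ?case
    by (simp only: psubstL_rename_Lam) (simp add: app_rel_app_site.rel_Lam)
next
  case (site_beta x K \<rho> u s)
  have "\<forall>i. case_nat (g x) \<rho>' (ren_up f i) = g (case_nat x \<rho> i)"
    using site_beta.prems by (auto simp: ren_up_def split: nat.split)
  from site_beta.IH[where f="ren_up f" and g=g and \<rho>'="case_nat (g x) \<rho>'", OF this] show ?case
    by (simp only: psubstL_rename_Lam) (simp add: app_rel_app_site.site_beta)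
qed (auto intro: app_rel_app_site.intros)

lemma app_rel_liftL: "app_rel x K \<rho> p p' \<Longrightarrow> app_rel (Suc x) K (ren_up \<rho>) (liftL 0 p) (liftL 0 p')"
  using app_rel_rename(1)[of x K \<rho> p p' "ren_up \<rho>" Suc Suc] by (simp add: liftL_0_eq_psubstL)

lemma app_rel_liftL_left:
  "app_rel x K \<rho> p p' \<Longrightarrow> app_rel x K (case_nat y \<rho>) (liftL 0 p) p'"
  using app_rel_rename(1)[of x K \<rho> p p' "case_nat y \<rho>" Suc "\<lambda>i. i"]
  by (simp add: liftL_0_eq_psubstL psubstL_Var)

lemma app_rel_liftM:
  "app_rel x K \<rho> p p' \<Longrightarrow> (\<And>k K'. \<forall>a. a \<in> K \<longleftrightarrow> (if a < k then a else Suc a) \<in> K' \<Longrightarrow>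
      app_rel x K' \<rho> (liftM k p) (liftM k p'))"
  "app_site x K \<rho> p p' \<Longrightarrow> (\<And>k K'. \<forall>a. a \<in> K \<longleftrightarrow> (if a < k then a else Suc a) \<in> K' \<Longrightarrow>
      app_site x K' \<rho> (liftM k p) (liftM k p'))"
proof (induction rule: app_rel_app_site.inducts)
  case (rel_Mu x K \<rho> u s)
  have "\<forall>a. a \<in> Suc ` K \<longleftrightarrow> (if a < Suc k then a else Suc a) \<in> Suc ` K'"
  proof
    fix a show "a \<in> Suc ` K \<longleftrightarrow> (if a < Suc k then a else Suc a) \<in> Suc ` K'"
      using rel_Mu.prems by (cases a) (auto simp: inj_image_mem_iff)
  qed
  then show ?case using rel_Mu.IH by (simp add: app_rel_app_site.rel_Mu)
next
  case (site_mu x K \<rho> u s)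
  have "\<forall>a. a \<in> insert 0 (Suc ` K) \<longleftrightarrow> (if a < Suc k then a else Suc a) \<in> insert 0 (Suc ` K')"
  proof
    fix a show "a \<in> insert 0 (Suc ` K) \<longleftrightarrow> (if a < Suc k then a else Suc a) \<in> insert 0 (Suc ` K')"
      using site_mu.prems by (cases a) (auto simp: inj_image_mem_iff)
  qed
  then show ?case using site_mu.IH by (simp add: app_rel_app_site.site_mu)
qed (auto intro: app_rel_app_site.intros)

lemma app_rel_liftM_0: "app_rel x K \<rho> p p' \<Longrightarrow> app_rel x (Suc ` K) \<rho> (liftM 0 p) (liftM 0 p')"
  by (rule app_rel_liftM(1)) (auto simp: inj_image_mem_iff)

lemma app_rel_liftM_0_site:
  "app_rel x K \<rho> p p' \<Longrightarrow> app_rel x (insert 0 (Suc ` K)) \<rho> (liftM 0 p) (liftM 0 p')"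
  by (rule app_rel_liftM(1)) (auto simp: inj_image_mem_iff)

lemma app_rel_psubstL:
  "app_rel x K \<rho> p p' \<Longrightarrow> (\<And>\<sigma> \<sigma>' y \<tau>. \<forall>i. app_rel y K \<tau> (\<sigma> i) (\<sigma>' (\<rho> i)) \<Longrightarrow> \<sigma>' x = Var y \<Longrightarrow>
      app_rel y K \<tau> (psubstL \<sigma> p) (psubstL \<sigma>' p'))"
  "app_site x K \<rho> p p' \<Longrightarrow> (\<And>\<sigma> \<sigma>' y \<tau>. \<forall>i. app_rel y K \<tau> (\<sigma> i) (\<sigma>' (\<rho> i)) \<Longrightarrow> \<sigma>' x = Var y \<Longrightarrow>
      app_site y K \<tau> (psubstL \<sigma> p) (psubstL \<sigma>' p'))"
proof (induction rule: app_rel_app_site.inducts)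
  case (rel_Lam x K \<rho> u s)
  have "\<forall>i. app_rel (Suc y) K (ren_up \<tau>) (case_nat (Var 0) (\<lambda>i. liftL 0 (\<sigma> i)) i)
            (case_nat (Var 0) (\<lambda>i. liftL 0 (\<sigma>' i)) (ren_up \<rho> i))"
  proof
    fix i show "app_rel (Suc y) K (ren_up \<tau>) (case_nat (Var 0) (\<lambda>i. liftL 0 (\<sigma> i)) i)
            (case_nat (Var 0) (\<lambda>i. liftL 0 (\<sigma>' i)) (ren_up \<rho> i))"
      using rel_Lam.prems(1) by (cases i) (auto intro: rel_Var app_rel_liftL)
  qed
  from rel_Lam.IH[OF this] rel_Lam.prems(2) show ?case by (simp add: app_rel_app_site.rel_Lam)
next
  case (rel_Mu x K \<rho> u s)
  have "\<forall>i. app_rel y (Suc ` K) \<tau> (liftM 0 (\<sigma> i)) (liftM 0 (\<sigma>' (\<rho> i)))"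
    using rel_Mu.prems(1) by (auto intro: app_rel_liftM_0)
  from rel_Mu.IH[OF this] rel_Mu.prems(2) show ?case by (simp add: app_rel_app_site.rel_Mu)
next
  case (site_beta x K \<rho> u s)
  have "\<forall>i. app_rel y K (case_nat y \<tau>) (case_nat (Var 0) (\<lambda>i. liftL 0 (\<sigma> i)) i)
            (\<sigma>' (case_nat x \<rho> i))"
  proof
    fix i show "app_rel y K (case_nat y \<tau>) (case_nat (Var 0) (\<lambda>i. liftL 0 (\<sigma> i)) i)
            (\<sigma>' (case_nat x \<rho> i))"
      using site_beta.prems by (cases i) (auto intro: rel_Var app_rel_liftL_left)
  qed
  from site_beta.IH[OF this] site_beta.prems(2) show ?case by (simp add: app_rel_app_site.site_beta)
next
  case (site_mu x K \<rho> u s)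
  have "\<forall>i. app_rel y (insert 0 (Suc ` K)) \<tau> (liftM 0 (\<sigma> i)) (liftM 0 (\<sigma>' (\<rho> i)))"
    using site_mu.prems(1) by (auto intro: app_rel_liftM_0_site)
  from site_mu.IH[OF this] site_mu.prems(2) show ?case by (simp add: app_rel_app_site.site_mu)
qed (auto intro: app_rel_app_site.intros)

lemma app_rel_substM:
  "app_rel x K \<rho> p p' \<Longrightarrow> (\<And>k v v'. k \<notin> K \<Longrightarrow> app_rel x K \<rho> v v' \<Longrightarrow>
      app_rel x K \<rho> (substM p k v) (substM p' k v'))"
  "app_site x K \<rho> p p' \<Longrightarrow> (\<And>k v v'. k \<notin> K \<Longrightarrow> app_rel x K \<rho> v v' \<Longrightarrow>
      app_site x K \<rho> (substM p k v) (substM p' k v'))"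
proof (induction rule: app_rel_app_site.inducts)
  case (rel_Lam x K \<rho> u s)
  then show ?case by (simp add: app_rel_app_site.rel_Lam app_rel_liftL)
next
  case (rel_Mu x K \<rho> u s)
  have "Suc k \<notin> Suc ` K" using rel_Mu.prems by auto
  then show ?case using rel_Mu by (simp add: app_rel_app_site.rel_Mu app_rel_liftM_0)
next
  case (rel_Named a K x \<rho> u s)
  then show ?case by (simp add: app_rel_app_site.rel_Named app_rel_app_site.rel_App)
next
  case (rel_site a K x \<rho> u s)
  then have "a \<noteq> k" by auto
  with rel_site show ?case by (simp add: app_rel_app_site.rel_site)
next
  case (site_beta x K \<rho> u s)
  then show ?case by (simp add: app_rel_app_site.site_beta app_rel_liftL_left)
next
  case (site_mu x K \<rho> u s)
  have "Suc k \<notin> insert 0 (Suc ` K)" using site_mu.prems by auto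
  then show ?case using site_mu by (simp add: app_rel_app_site.site_mu app_rel_liftM_0_site)
qed (auto intro: app_rel_app_site.intros)

lemma app_rel_add_site:
  "app_rel x K \<rho> p p' \<Longrightarrow> (\<And>k. k \<notin> K \<Longrightarrow> app_rel x (insert k K) \<rho> p (substM p' k (Var x)))"
  "app_site x K \<rho> p p' \<Longrightarrow> (\<And>k. k \<notin> K \<Longrightarrow> app_site x (insert k K) \<rho> p (substM p' k (Var x)))"
proof (induction rule: app_rel_app_site.inducts)
  case (rel_Mu x K \<rho> u s)
  have "Suc k \<notin> Suc ` K" "insert (Suc k) (Suc ` K) = Suc ` insert k K"
    using rel_Mu.prems by auto
  with rel_Mu.IH show ?case by (metis app_rel_app_site.rel_Mu substM.simps(4) liftM.simps(1))
next
  case (rel_site a K x \<rho> u s)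
  then have "a \<noteq> k" by auto
  with rel_site show ?case by (simp add: app_rel_app_site.rel_site)
next
  case (site_mu x K \<rho> u s)
  have "Suc k \<notin> insert 0 (Suc ` K)"
    "insert (Suc k) (insert 0 (Suc ` K)) = insert 0 (Suc ` insert k K)"
    using site_mu.prems by auto
  with site_mu.IH show ?case by (metis app_rel_app_site.site_mu substM.simps(4) liftM.simps(1))
qed (auto intro: app_rel_app_site.intros)

inductive_cases app_rel_AppE: "app_rel x K \<rho> u (App s1 s2)"
inductive_cases app_rel_LamE: "app_rel x K \<rho> u (Lam s)"
inductive_cases app_rel_MuE: "app_rel x K \<rho> u (Mu s)"
inductive_cases app_rel_NamedE: "app_rel x K \<rho> u (Named a s)"
inductive_cases app_siteE: "app_site x K \<rho> u s"
inductive_cases red1_VarE: "red1 (Var i) t"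

lemma app_rel_substL_0:
  assumes "app_rel (Suc x) K (ren_up \<rho>) u s" "app_rel x K \<rho> v v'"
  shows "app_rel x K \<rho> (substL u 0 v) (substL s 0 v')"
proof -
  have "\<forall>i. app_rel x K \<rho> (subst_env 0 v i) (subst_env 0 v' (ren_up \<rho> i))"
  proof
    fix i show "app_rel x K \<rho> (subst_env 0 v i) (subst_env 0 v' (ren_up \<rho> i))"
      using assms(2) by (cases i) (auto simp: subst_env_def intro: rel_Var)
  qed
  moreover have "subst_env 0 v' (Suc x) = Var x" by (simp add: subst_env_def)
  ultimately show ?thesis using app_rel_psubstL(1)[OF assms(1)] by (simp add: substL_eq_psubstL)
qed

lemma app_rel_substL_0_site:
  "app_rel (Suc x) K (ren_up \<rho>) u s \<Longrightarrow> app_rel x K (case_nat x \<rho>) u (substL s 0 (Var x))"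
proof -
  have "subst_env 0 (Var x) = (\<lambda>i. Var (case_nat x (\<lambda>i. i) i))"
    by (rule ext) (auto simp: subst_env_def split: nat.split)
  then show "app_rel (Suc x) K (ren_up \<rho>) u s \<Longrightarrow> ?thesis"
    using app_rel_rename(1)[of "Suc x" K "ren_up \<rho>" u s "case_nat x \<rho>" "\<lambda>i. i" "case_nat x (\<lambda>i. i)"]
    by (simp add: substL_eq_psubstL psubstL_Var split: nat.split)
qed

definition app_rel_sim :: "trm \<Rightarrow> trm \<Rightarrow> bool" where
  "app_rel_sim s s' \<longleftrightarrow> (\<forall>x K \<rho> u. app_rel x K \<rho> u s \<longrightarrow> (\<exists>u'. reds u u' \<and> app_rel x K \<rho> u' s'))"

definition app_site_sim :: "trm \<Rightarrow> trm \<Rightarrow> bool" where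
  "app_site_sim s s' \<longleftrightarrow> (\<forall>x K \<rho> u. app_site x K \<rho> u s \<longrightarrow> (\<exists>u'. reds u u' \<and> app_site x K \<rho> u' s'))"

lemma app_site_simI:
  assumes "app_rel_sim s s'"
    and "\<And>x K \<rho> u s0. s = App s0 (Var x) \<Longrightarrow> app_rel x K \<rho> u s0 \<Longrightarrow>
           \<exists>u'. reds u u' \<and> app_site x K \<rho> u' s'"
    and "\<And>x K \<rho> u q. s = Mu q \<Longrightarrow> app_rel x (insert 0 (Suc ` K)) \<rho> u q \<Longrightarrow>
           \<exists>u'. reds (Mu u) u' \<and> app_site x K \<rho> u' s'"
  shows "app_site_sim s s'"
  unfolding app_site_sim_def
proof (intro allI impI)
  fix x K \<rho> u assume "app_site x K \<rho> u s"
  then consider s0 where "s = App s0 (Var x)" "app_rel x K \<rho> u s0"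
    | r where "u = Lam r" "app_rel x K (case_nat x \<rho>) r s"
    | r q where "u = Mu r" "s = Mu q" "app_rel x (insert 0 (Suc ` K)) \<rho> r q"
    by (auto elim: app_siteE)
  then show "\<exists>u'. reds u u' \<and> app_site x K \<rho> u' s'"
  proof cases
    case 2
    then show ?thesis using assms(1) unfolding app_rel_sim_def by (metis reds_Lam site_beta)
  qed (use assms(2,3) in blast)+
qed

lemma red1_beta_sim:
  "app_rel_sim (App (Lam b) c) (substL b 0 c) \<and> app_site_sim (App (Lam b) c) (substL b 0 c)"
proof
  show rel: "app_rel_sim (App (Lam b) c) (substL b 0 c)"
    unfolding app_rel_sim_def
  proof (intro allI impI)
    fix x K \<rho> u assume "app_rel x K \<rho> u (App (Lam b) c)"
    then obtain u1 u2 where "u = App (Lam u1) u2" "app_rel (Suc x) K (ren_up \<rho>) u1 b" "app_rel x K \<rho> u2 c"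
      by (auto elim!: app_rel_AppE app_rel_LamE)
    then show "\<exists>u'. reds u u' \<and> app_rel x K \<rho> u' (substL b 0 c)"
      using red1.beta app_rel_substL_0 by blast
  qed
  show "app_site_sim (App (Lam b) c) (substL b 0 c)"
  proof (rule app_site_simI[OF rel])
    fix x K \<rho> u s0 assume "App (Lam b) c = App s0 (Var x)" "app_rel x K \<rho> u s0"
    then obtain r where "u = Lam r" "app_rel (Suc x) K (ren_up \<rho>) r b" "c = Var x"
      by (auto elim!: app_rel_LamE)
    then show "\<exists>u'. reds u u' \<and> app_site x K \<rho> u' (substL b 0 c)"
      using app_rel_substL_0_site site_beta by blast
  qed simp
qed

lemma red1_mu_sim:
  "app_rel_sim (App (Mu b) c) (Mu (substM b 0 (liftM 0 c))) \<and>
   app_site_sim (App (Mu b) c) (Mu (substM b 0 (liftM 0 c)))"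
proof
  show rel: "app_rel_sim (App (Mu b) c) (Mu (substM b 0 (liftM 0 c)))"
    unfolding app_rel_sim_def
  proof (intro allI impI)
    fix x K \<rho> u assume "app_rel x K \<rho> u (App (Mu b) c)"
    then obtain u1 u2 where u: "u = App (Mu u1) u2" "app_rel x (Suc ` K) \<rho> u1 b" "app_rel x K \<rho> u2 c"
      by (auto elim!: app_rel_AppE app_rel_MuE)
    have "app_rel x K \<rho> (Mu (substM u1 0 (liftM 0 u2))) (Mu (substM b 0 (liftM 0 c)))"
      by (rule rel_Mu, rule app_rel_substM(1)[OF u(2)]) (auto intro: app_rel_liftM_0 u(3))
    with u(1) red1.mu show "\<exists>u'. reds u u' \<and> app_rel x K \<rho> u' (Mu (substM b 0 (liftM 0 c)))"
      by blast
  qed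
  show "app_site_sim (App (Mu b) c) (Mu (substM b 0 (liftM 0 c)))"
  proof (rule app_site_simI[OF rel])
    fix x K \<rho> u s0 assume "App (Mu b) c = App s0 (Var x)" "app_rel x K \<rho> u s0"
    then obtain r where r: "u = Mu r" "app_rel x (Suc ` K) \<rho> r b" "c = Var x"
      by (auto elim!: app_rel_MuE)
    have "app_rel x (insert 0 (Suc ` K)) \<rho> r (substM b 0 (Var x))"
      using app_rel_add_site(1)[OF r(2)] by auto
    with r show "\<exists>u'. reds u u' \<and> app_site x K \<rho> u' (Mu (substM b 0 (liftM 0 c)))"
      using site_mu by auto
  qed simp
qed

lemma app_rel_sim_Lam: "app_rel_sim t t' \<Longrightarrow> app_rel_sim (Lam t) (Lam t')"
  unfolding app_rel_sim_def by (blast elim!: app_rel_LamE intro: reds_Lam rel_Lam)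

lemma app_rel_sim_Mu: "app_rel_sim t t' \<Longrightarrow> app_rel_sim (Mu t) (Mu t')"
  unfolding app_rel_sim_def by (blast elim!: app_rel_MuE intro: reds_Mu rel_Mu)

lemma app_rel_sim_App:
  "app_rel_sim t t' \<Longrightarrow> app_rel_sim v v' \<Longrightarrow> app_rel_sim (App t v) (App t' v')"
  unfolding app_rel_sim_def by (blast elim!: app_rel_AppE intro: reds_App rel_App)

lemma app_rel_sim_refl: "app_rel_sim t t"
  unfolding app_rel_sim_def by blast

lemma app_rel_sim_Named:
  "app_rel_sim t t' \<Longrightarrow> app_site_sim t t' \<Longrightarrow> app_rel_sim (Named a t) (Named a t')"
  unfolding app_rel_sim_def app_site_sim_def
  by (blast elim!: app_rel_NamedE intro: reds_Named rel_Named rel_site)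

lemma red1_app_sim: "red1 s s' \<Longrightarrow> app_rel_sim s s' \<and> app_site_sim s s'"
proof (induction rule: red1.induct)
  case (beta u v)
  then show ?case by (rule red1_beta_sim)
next
  case (mu u v)
  then show ?case by (rule red1_mu_sim)
next
  case (appR u u' t)
  then show ?case
    by (auto intro!: app_site_simI app_rel_sim_App app_rel_sim_refl elim: red1_VarE)
next
  case (appL t t' u)
  have rel: "app_rel_sim (App t u) (App t' u)"
    using appL.IH by (blast intro: app_rel_sim_App app_rel_sim_refl)
  have "app_site_sim (App t u) (App t' u)"
  proof (rule app_site_simI[OF rel])
    fix x K \<rho> v s0 assume "App t u = App s0 (Var x)" "app_rel x K \<rho> v s0"
    with appL.IH show "\<exists>v'. reds v v' \<and> app_site x K \<rho> v' (App t' u)"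
      unfolding app_rel_sim_def by (blast intro: site_App)
  qed simp
  with rel show ?case ..
next
  case (muc t t')
  have rel: "app_rel_sim (Mu t) (Mu t')"
    using muc.IH by (blast intro: app_rel_sim_Mu)
  have "app_site_sim (Mu t) (Mu t')"
  proof (rule app_site_simI[OF rel])
    fix x K \<rho> v q assume "Mu t = Mu q" "app_rel x (insert 0 (Suc ` K)) \<rho> v q"
    with muc.IH show "\<exists>v'. reds (Mu v) v' \<and> app_site x K \<rho> v' (Mu t')"
      unfolding app_rel_sim_def by (blast intro: reds_Mu site_mu)
  qed simp
  with rel show ?case ..
qed (auto intro!: app_site_simI app_rel_sim_Lam app_rel_sim_Named)

lemma reds_app_site:
  "reds s s' \<Longrightarrow> app_site x K \<rho> u s \<Longrightarrow> \<exists>u'. reds u u' \<and> app_site x K \<rho> u' s'"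
proof (induction arbitrary: u rule: rtranclp_induct)
  case (step y z)
  then obtain u1 where "reds u u1" "app_site x K \<rho> u1 y" by blast
  with red1_app_sim[OF step.hyps(2)] show ?case
    unfolding app_site_sim_def by (meson rtranclp_trans)
qed blast

definition site_ctx :: "ty \<Rightarrow> nat set \<Rightarrow> (nat \<Rightarrow> ty) \<Rightarrow> nat \<Rightarrow> ty" where
  "site_ctx B K \<Delta> a = (if a \<in> K then Arr B (\<Delta> a) else \<Delta> a)"

lemma site_ctx_empty [simp]: "site_ctx B {} \<Delta> = \<Delta>"
  by (rule ext) (simp add: site_ctx_def)

lemma case_nat_site_ctx: "case_nat A (site_ctx B K \<Delta>) = site_ctx B (Suc ` K) (case_nat A \<Delta>)"
  by (rule ext) (auto simp: site_ctx_def inj_image_mem_iff split: nat.split)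

lemma case_nat_Arr_site_ctx:
  "case_nat (Arr B A) (site_ctx B K \<Delta>) = site_ctx B (insert 0 (Suc ` K)) (case_nat A \<Delta>)"
  by (rule ext) (auto simp: site_ctx_def inj_image_mem_iff split: nat.split)

inductive_cases typing_VarE: "typing \<Gamma> (Var i) A \<Delta>"
inductive_cases typing_LamE: "typing \<Gamma> (Lam t) A \<Delta>"
inductive_cases typing_AppE: "typing \<Gamma> (App t u) A \<Delta>"
inductive_cases typing_MuE: "typing \<Gamma> (Mu t) A \<Delta>"
inductive_cases typing_NamedE: "typing \<Gamma> (Named a t) A \<Delta>"

lemma app_rel_typing:
  "app_rel x K \<rho> u s \<Longrightarrow> (\<And>\<Gamma> A \<Delta>. typing \<Gamma> s A \<Delta> \<Longrightarrow>
      typing (\<lambda>i. \<Gamma> (\<rho> i)) u A (site_ctx (\<Gamma> x) K \<Delta>))"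
  "app_site x K \<rho> u s \<Longrightarrow> (\<And>\<Gamma> A \<Delta>. typing \<Gamma> s A \<Delta> \<Longrightarrow>
      typing (\<lambda>i. \<Gamma> (\<rho> i)) u (Arr (\<Gamma> x) A) (site_ctx (\<Gamma> x) K \<Delta>))"
proof (induction rule: app_rel_app_site.inducts)
  case (rel_Var \<rho> i j x K)
  then show ?case by (auto elim!: typing_VarE intro: typing.ax)
next
  case (rel_Lam x K \<rho> u s)
  from rel_Lam.prems obtain A1 A2 where A: "A = Arr A1 A2" "typing (case_nat A1 \<Gamma>) s A2 \<Delta>"
    by (auto elim!: typing_LamE)
  have "(\<lambda>i. case_nat A1 \<Gamma> (ren_up \<rho> i)) = case_nat A1 (\<lambda>i. \<Gamma> (\<rho> i))"
    by (rule ext) (simp split: nat.split)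
  with rel_Lam.IH[OF A(2)] have "typing (case_nat A1 (\<lambda>i. \<Gamma> (\<rho> i))) u A2 (site_ctx (\<Gamma> x) K \<Delta>)"
    by simp
  then show ?case unfolding A(1) by (rule typing.arrI)
next
  case (rel_App x K \<rho> u1 s1 u2 s2)
  then show ?case by (blast elim!: typing_AppE intro: typing.arrE)
next
  case (rel_Mu x K \<rho> u s)
  from rel_Mu.prems have "typing \<Gamma> s Bot (case_nat A \<Delta>)" by (auto elim!: typing_MuE)
  with rel_Mu.IH have "typing (\<lambda>i. \<Gamma> (\<rho> i)) u Bot (case_nat A (site_ctx (\<Gamma> x) K \<Delta>))"
    by (simp add: case_nat_site_ctx)
  then show ?case by (rule typing.muI)
next
  case (rel_Named a K x \<rho> u s)
  from rel_Named.prems have "A = Bot" "typing \<Gamma> s (\<Delta> a) \<Delta>" by (auto elim!: typing_NamedE)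
  with rel_Named show ?case by (auto simp: site_ctx_def intro: typing.botI)
next
  case (rel_site a K x \<rho> u s)
  from rel_site.prems have "A = Bot" "typing \<Gamma> s (\<Delta> a) \<Delta>" by (auto elim!: typing_NamedE)
  with rel_site show ?case by (auto simp: site_ctx_def intro: typing.botI)
next
  case (site_App x K \<rho> u s)
  from site_App.prems have "typing \<Gamma> s (Arr (\<Gamma> x) A) \<Delta>"
    by (auto elim!: typing_AppE typing_VarE)
  with site_App.IH show ?case by blast
next
  case (site_beta x K \<rho> u s)
  have "(\<lambda>i. \<Gamma> (case_nat x \<rho> i)) = case_nat (\<Gamma> x) (\<lambda>i. \<Gamma> (\<rho> i))"
    by (rule ext) (simp split: nat.split)
  with site_beta.IH[OF site_beta.prems] show ?case by (simp add: typing.arrI)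
next
  case (site_mu x K \<rho> u s)
  from site_mu.prems have "typing \<Gamma> s Bot (case_nat A \<Delta>)" by (auto elim!: typing_MuE)
  with site_mu.IH
  have "typing (\<lambda>i. \<Gamma> (\<rho> i)) u Bot (case_nat (Arr (\<Gamma> x) A) (site_ctx (\<Gamma> x) K \<Delta>))"
    by (simp add: case_nat_Arr_site_ctx)
  then show ?case by (rule typing.muI)
qed

lemma typstar_App: "typstar G D t (Arr B C) \<Longrightarrow> typstar G D v B \<Longrightarrow> typstar G D (App t v) C"
  unfolding typstar_def by (blast intro: reds_App typing.arrE)

lemma typstar_of_typstar_App_Var:
  assumes "typstar G D (App t (Var x)) C"
  shows "typstar G D t (Arr (G x) C)"
proof -
  from assms obtain w where w: "reds (App t (Var x)) w" "typing G w C D"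
    unfolding typstar_def by blast
  have "app_site x {} (\<lambda>i. i) t (App t (Var x))"
    by (rule site_App, rule app_rel_refl)
  with reds_app_site[OF w(1)] obtain t' where "reds t t'" "app_site x {} (\<lambda>i. i) t' w"
    by blast
  moreover from app_rel_typing(2)[OF this(2) w(2)] have "typing G t' (Arr (G x) C) D"
    by simp
  ultimately show ?thesis unfolding typstar_def by blast
qed

lemma interp_iff_typstar:
  assumes "surj G"
  shows "t \<in> interp G D A \<longleftrightarrow> typstar G D t A"
proof (induction A arbitrary: t)
  case (Arr B C)
  show ?case
  proof
    assume t: "t \<in> interp G D (Arr B C)"
    from assms obtain x where x: "G x = B" by (metis surjD)
    then have "typstar G D (Var x) B"
      unfolding typstar_def by (blast intro: typing.ax)
    with t Arr.IH have "typstar G D (App t (Var x)) C"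
      by (simp add: arrow_set_def)
    from typstar_of_typstar_App_Var[OF this] x show "typstar G D t (Arr B C)" by simp
  next
    assume "typstar G D t (Arr B C)"
    with Arr.IH show "t \<in> interp G D (Arr B C)"
      by (simp add: arrow_set_def typstar_App)
  qed
qed (simp_all add: SS_def RR_def)

theorem mainTheorem15:
  fixes G D :: "nat \<Rightarrow> ty" and A :: ty and t :: trm
  assumes "\<And>T. infinite {i. G i = T}"
    and "surj D"
    and "infinite {j. D j = Bot}"
  shows "(typstar G D t A \<longrightarrow> t \<in> interp G D A) \<and>
         (t \<in> interp G D A \<longrightarrow> typstar G D t A)"
proof -
  have "surj G"
  proof (rule surjI)
    fix T
    from assms(1)[of T] have "{i. G i = T} \<noteq> {}" by (metis finite.emptyI)
    then have "\<exists>i. G i = T" by blast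
    then show "G (SOME i. G i = T) = T" by (rule someI_ex)
  qed
  then show ?thesis using interp_iff_typstar by blast
qed

end
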